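(* Let $S \subseteq \mathbb{R}^r$ be a linear subspace, $0 \le d \le r$, and $C(S,d)$ the associated s-cone. Let $x, x' \in C(S,d)$ be nonzero vectors which are not proportional. If $\operatorname{supp}(x') \subseteq \operatorname{supp}(x)$, then there exists a nonzero vector $x'' = x - \lambda x' \in C(S,d)$ with $\lambda \in \mathbb{R}$ such that $\operatorname{sign}(x'') \le \operatorname{sign}(x)$ and $\operatorname{supp}(x'') \subsetneq \operatorname{supp}(x)$. If moreover $\operatorname{sign}(x') \le \operatorname{sign}(x)$, then $\lambda > 0$ can be taken.
   Context: For $x \in \mathbb{R}^n$, $\operatorname{supp}(x) = \{ i \mid x_i \neq 0\}$, and $\operatorname{sign}(x) \in \{-,0,+\}^n$ is obtained by applying the sign function componentwise. The relations $0 < -$ and $0 < +$ induce a componentwise partial order on $\{-,0,+\}^n$ ($-$ and $+$ incomparable). For a linear subspace $S \subseteq \mathbb{R}^r$ and $0 \le d \le r$, the s-cone is $C(S,d) = \{ (x,y) \in \mathbb{R}^{(r-d)+d} \mid (x,y) \in S,\ y \ge 0\}$. *)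

theory Defs
  imports "HOL-Analysis.Analysis"
begin

text \<open>Vectors of R^r are represented as functions nat => real vanishing outside {0..<r};
  coordinate i (0-based) corresponds to coordinate i+1 of the paper.\<close>

definition vecs :: "nat \<Rightarrow> (nat \<Rightarrow> real) set" where
  "vecs r = {x. \<forall>i\<ge>r. x i = 0}"

definition supp :: "(nat \<Rightarrow> real) \<Rightarrow> nat set" where
  "supp x = {i. x i \<noteq> 0}"

text \<open>Sign vectors: sign values are encoded as reals -1, 0, 1 (via sgn).
  The order 0 < -, 0 < + (with - and + incomparable), componentwise.\<close>

definition sign_le :: "real \<Rightarrow> real \<Rightarrow> bool" where
  "sign_le a b \<longleftrightarrow> a = b \<or> a = 0"

definition sign_vec_le :: "(nat \<Rightarrow> real) \<Rightarrow> (nat \<Rightarrow> real) \<Rightarrow> bool" where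
  "sign_vec_le x y \<longleftrightarrow> (\<forall>i. sign_le (sgn (x i)) (sgn (y i)))"

definition lin_subspace :: "nat \<Rightarrow> (nat \<Rightarrow> real) set \<Rightarrow> bool" where
  "lin_subspace r S \<longleftrightarrow> S \<subseteq> vecs r \<and> (\<lambda>i. 0) \<in> S
     \<and> (\<forall>u\<in>S. \<forall>v\<in>S. (\<lambda>i. u i + v i) \<in> S)
     \<and> (\<forall>c::real. \<forall>u\<in>S. (\<lambda>i. c * u i) \<in> S)"

definition s_cone :: "nat \<Rightarrow> (nat \<Rightarrow> real) set \<Rightarrow> nat \<Rightarrow> (nat \<Rightarrow> real) set" where
  "s_cone r S d = {z. z \<in> S \<and> (\<forall>i. r - d \<le> i \<and> i < r \<longrightarrow> z i \<ge> 0)}"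

end

theory Submission
  imports Defs
begin

text \<open>Choose a coordinate \<open>j\<close> of \<open>supp x\<close> maximising \<open>\<bar>x' j / x j\<bar>\<close> and put
  \<open>\<lambda> = x j / x' j\<close>. Then \<open>x i - \<lambda> x' i = x i (1 - (x' i / x i) / (x' j / x j))\<close>, where the
  second factor is nonnegative, so no sign of \<open>x\<close> flips, while coordinate \<open>j\<close> vanishes.
  Sign-conformal elements of \<open>S\<close> stay in the s-cone, and if \<open>sign x' \<le> sign x\<close> then
  \<open>x' j\<close> and \<open>x j\<close> have the same sign, whence \<open>\<lambda> > 0\<close>.\<close>

lemma finite_supp_vecs: "x \<in> vecs r \<Longrightarrow> finite (supp x)"
  unfolding vecs_def supp_def
  by (rule finite_subset[of _ "{..<r}"]) (auto simp: not_less[symmetric])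

lemma lin_subspace_diff_scaled:
  assumes "lin_subspace r S" "u \<in> S" "v \<in> S"
  shows "(\<lambda>i. u i - c * v i) \<in> S"
proof -
  have add: "\<forall>u\<in>S. \<forall>v\<in>S. (\<lambda>i. u i + v i) \<in> S"
    and scale: "\<forall>c. \<forall>u\<in>S. (\<lambda>i. c * u i) \<in> S"
    using assms(1) unfolding lin_subspace_def by simp_all
  have "(\<lambda>i. (- c) * v i) \<in> S" using bspec[OF spec[OF scale] assms(3)] .
  then have "(\<lambda>i. u i + (- c) * v i) \<in> S"
    using bspec[OF bspec[OF add assms(2)], of "\<lambda>i. (- c) * v i"] by simp
  then show ?thesis by simp
qed

lemma sign_le_sgn_mult_nonneg: "0 \<le> c \<Longrightarrow> sign_le (sgn (a * c)) (sgn a)"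
  by (cases "c = 0") (auto simp: sign_le_def sgn_mult)

lemma sign_le_sgn_nonzero: "sign_le (sgn a) (sgn b) \<Longrightarrow> a \<noteq> 0 \<Longrightarrow> sgn a = sgn b"
  by (auto simp: sign_le_def sgn_0_0)

lemma sign_le_sgn_nonneg:
  assumes "sign_le (sgn a) (sgn b)" "0 \<le> b"
  shows "0 \<le> a"
proof (rule ccontr)
  assume "\<not> 0 \<le> a"
  then have "sgn b = - 1" using assms(1) by (simp add: sign_le_def)
  with assms(2) show False by (cases "b = 0") simp_all
qed

lemma sign_vec_le_supp: "sign_vec_le z x \<Longrightarrow> supp z \<subseteq> supp x"
proof
  fix i assume "sign_vec_le z x" "i \<in> supp z"
  then have "sgn (z i) = sgn (x i)" "z i \<noteq> 0"
    using sign_le_sgn_nonzero by (auto simp: sign_vec_le_def supp_def)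
  then show "i \<in> supp x" by (auto simp: supp_def sgn_0_0)
qed

lemma s_cone_sign_conformal:
  assumes "z \<in> S" "x \<in> s_cone r S d" "sign_vec_le z x"
  shows "z \<in> s_cone r S d"
proof -
  have "z i \<ge> 0" if "x i \<ge> 0" for i
    using that assms(3) sign_le_sgn_nonneg unfolding sign_vec_le_def by blast
  then show ?thesis using assms(1,2) by (simp add: s_cone_def)
qed

lemma exists_max_ratio:
  assumes "finite (supp x)" "supp x' \<subseteq> supp x" "x' \<noteq> (\<lambda>i. 0)"
  obtains j where "j \<in> supp x" "x' j \<noteq> 0" "\<And>i. i \<in> supp x \<Longrightarrow> \<bar>x' i / x i\<bar> \<le> \<bar>x' j / x j\<bar>"
proof -
  obtain k where k: "x' k \<noteq> 0" using assms(3) by auto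
  then have "k \<in> supp x" using assms(2) by (auto simp: supp_def)
  let ?ratios = "(\<lambda>i. \<bar>x' i / x i\<bar>) ` supp x"
  have "Max ?ratios \<in> ?ratios" using assms(1) \<open>k \<in> supp x\<close> by (intro Max_in) auto
  then obtain j where j: "j \<in> supp x" "\<bar>x' j / x j\<bar> = Max ?ratios" by auto
  have max: "\<bar>x' i / x i\<bar> \<le> \<bar>x' j / x j\<bar>" if "i \<in> supp x" for i
    using assms(1) that unfolding j(2) by simp
  have "\<bar>x' k / x k\<bar> > 0" using k \<open>k \<in> supp x\<close> by (simp add: supp_def)
  then have "x' j \<noteq> 0" using max[OF \<open>k \<in> supp x\<close>] by auto
  from that[OF j(1) this max] show thesis .
qed

lemma sign_vec_le_diff_max_ratio:
  assumes "supp x' \<subseteq> supp x" "x' j \<noteq> 0"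
    and max: "\<And>i. i \<in> supp x \<Longrightarrow> \<bar>x' i / x i\<bar> \<le> \<bar>x' j / x j\<bar>"
  shows "sign_vec_le (\<lambda>i. x i - x j / x' j * x' i) x"
  unfolding sign_vec_le_def
proof
  fix i
  show "sign_le (sgn (x i - x j / x' j * x' i)) (sgn (x i))"
  proof (cases "x i = 0")
    case True
    then have "x' i = 0" using assms(1) by (auto simp: supp_def)
    with True show ?thesis by (simp add: sign_le_def)
  next
    case False
    have "x j \<noteq> 0" using assms(1,2) by (auto simp: supp_def)
    have "(x' i / x i) / (x' j / x j) \<le> \<bar>x' i / x i\<bar> / \<bar>x' j / x j\<bar>"
      by (metis abs_divide abs_ge_self)
    also have "\<dots> \<le> 1"
      using max[of i] False \<open>x j \<noteq> 0\<close> assms(2)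
      by (subst divide_le_eq_1_pos) (auto simp: supp_def simp del: abs_divide)
    finally have "0 \<le> 1 - (x' i / x i) / (x' j / x j)" by simp
    moreover have "x i - x j / x' j * x' i = x i * (1 - (x' i / x i) / (x' j / x j))"
      using False by (simp add: field_simps)
    ultimately show ?thesis by (simp add: sign_le_sgn_mult_nonneg)
  qed
qed

lemma sign_vec_le_ratio_pos:
  assumes "sign_vec_le x' x" "x' j \<noteq> 0"
  shows "0 < x j / x' j"
proof -
  have "sgn (x' j) = sgn (x j)"
    using assms sign_le_sgn_nonzero by (auto simp: sign_vec_le_def)
  then show ?thesis
    using assms(2) by (cases "x' j > 0") (auto simp: sgn_if zero_less_divide_iff split: if_splits)
qed

lemma diff_scaled_nonzero:
  assumes "\<not> (\<exists>c::real. x' = (\<lambda>i. c * x i))" "l \<noteq> 0"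
  shows "(\<lambda>i. x i - l * x' i) \<noteq> (\<lambda>i. 0)"
proof
  assume "(\<lambda>i. x i - l * x' i) = (\<lambda>i. 0)"
  then have "x' = (\<lambda>i. (1 / l) * x i)"
    using assms(2) by (auto simp: fun_eq_iff field_simps)
  with assms(1) show False by blast
qed

theorem lemma1:
  fixes r d :: nat and S :: "(nat \<Rightarrow> real) set" and x x' :: "nat \<Rightarrow> real"
  assumes "lin_subspace r S" and "d \<le> r"
    and "x \<in> s_cone r S d" and "x' \<in> s_cone r S d"
    and "x \<noteq> (\<lambda>i. 0)" and "x' \<noteq> (\<lambda>i. 0)"
    and "\<not> (\<exists>c::real. x' = (\<lambda>i. c * x i))"
    and "supp x' \<subseteq> supp x"
  shows "\<exists>l::real. let x'' = (\<lambda>i. x i - l * x' i) in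
            x'' \<noteq> (\<lambda>i. 0) \<and> x'' \<in> s_cone r S d
            \<and> sign_vec_le x'' x \<and> supp x'' \<subset> supp x
            \<and> (sign_vec_le x' x \<longrightarrow> l > 0)"
proof -
  have "x \<in> S" "x' \<in> S" using assms(3,4) by (auto simp: s_cone_def)
  then have "finite (supp x)" using assms(1) finite_supp_vecs by (auto simp: lin_subspace_def)
  then obtain j where j: "j \<in> supp x" "x' j \<noteq> 0"
    and max: "\<And>i. i \<in> supp x \<Longrightarrow> \<bar>x' i / x i\<bar> \<le> \<bar>x' j / x j\<bar>"
    using exists_max_ratio assms(6,8) by blast
  define l where "l = x j / x' j"
  define x'' where "x'' = (\<lambda>i. x i - l * x' i)"
  have sign: "sign_vec_le x'' x"
    unfolding x''_def l_def using sign_vec_le_diff_max_ratio[OF assms(8) j(2) max] .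
  have "x'' \<in> S" unfolding x''_def using lin_subspace_diff_scaled assms(1) \<open>x \<in> S\<close> \<open>x' \<in> S\<close> .
  then have cone: "x'' \<in> s_cone r S d" using s_cone_sign_conformal assms(3) sign by blast
  have "supp x'' \<subseteq> supp x" using sign by (rule sign_vec_le_supp)
  moreover have "x'' j = 0" using j(2) by (simp add: x''_def l_def)
  ultimately have supp: "supp x'' \<subset> supp x" using j(1) by (auto simp: supp_def)
  have "l \<noteq> 0" using j by (simp add: l_def supp_def)
  then have "x'' \<noteq> (\<lambda>i. 0)" unfolding x''_def using assms(7) by (rule diff_scaled_nonzero[rotated])
  moreover have "l > 0" if "sign_vec_le x' x"
    using sign_vec_le_ratio_pos[OF that j(2)] by (simp add: l_def)
  ultimately show ?thesis using cone sign supp by (auto simp: x''_def Let_def)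
qed

end
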